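(* Let $p\geq1$, $\mu>0$, and let $g:\mathbb{R}^n\to\mathbb{R}\cup\{+\infty\}$ be convex. Let $\lambda^{\ast}$ be the optimal solution of $$\min_{\lambda\in\mathbb{R}^n}\Big\{g(\lambda)+\frac{\mu}{1+\frac1p}\lVert\lambda\rVert^{1+\frac1p}\Big\},$$ and suppose $\lambda^{\ast}\neq0$. Let $\lambda^0\in\mathbb{R}^n$ with $\lambda^0\neq0$ and generate $\lambda^1,\dots,\lambda^N$ by: $t^k=\lVert\lambda^k\rVert^{\frac1p-1}$ if $\lambda^k\neq0$, $t^k=0$ otherwise, and $\lambda^{k+1}=\arg\min_{\lambda\in\mathbb{R}^n}\{g(\lambda)+\frac{\mu}{2}t^k\lVert\lambda\rVert^2\}$. Suppose $\lVert\lambda^0\rVert\leq\lVert\lambda^{\ast}\rVert$ and $\lambda^k\neq\lambda^{\ast}$ for $k=1,2,\dots,N$. Then $$\lVert\lambda^N-\lambda^{\ast}\rVert\leq\Big(1-\frac1p\Big)\lVert\lambda^{\ast}\rVert\Big(e^{(1-\frac1p)^{N-1}\ln\frac{\lVert\lambda^{\ast}\rVert}{\lVert\lambda^0\rVert}}-1\Big)\leq\frac{\lVert\lambda^{\ast}\rVert}{\lVert\lambda^0\rVert}\big(\lVert\lambda^{\ast}\rVert-\lVert\lambda^0\rVert\big)\Big(1-\frac1p\Big)^{N}.$$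
   Context: $\lVert\cdot\rVert$ is the Euclidean norm. The minimizers in the iteration are assumed to exist. *)

theory Defs
  imports "HOL-Analysis.Analysis"
begin

end

theory Submission
  imports Defs
begin

text \<open>
  Both \<open>\<lambda>\<^sup>*\<close> and each \<open>\<lambda>\<^sub>k\<^sub>+\<^sub>1\<close>
  minimize \<open>g\<close> plus a weighted \<open>\<parallel>\<lambda>\<parallel>\<^sup>2\<close>: for \<open>\<lambda>\<^sup>*\<close> the weight is \<open>\<mu>/2 \<parallel>\<lambda>\<^sup>*\<parallel>\<^bsup>1/p-1\<^esup>\<close>,
  because the concave map \<open>s \<mapsto> s\<^bsup>(1+1/p)/2\<^esup>\<close> lies below its tangent at \<open>s = \<parallel>\<lambda>\<^sup>*\<parallel>\<^sup>2\<close>.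
  Adding the first-order optimality conditions of two such problems with weights
  \<open>w\<^sub>s \<le> w\<^sub>t\<close> and minimizers \<open>\<lambda>\<^sub>s\<close>, \<open>\<lambda>\<^sub>t\<close> gives \<open>\<parallel>\<lambda>\<^sub>t\<parallel> \<le> \<parallel>\<lambda>\<^sub>s\<parallel>\<close> and
  \<open>\<parallel>\<lambda>\<^sub>t - \<lambda>\<^sub>s\<parallel> \<le> (1 - w\<^sub>s/w\<^sub>t) \<parallel>\<lambda>\<^sub>s\<parallel>\<close>. For \<open>\<lambda>\<^sub>k\<^sub>+\<^sub>1\<close> against \<open>\<lambda>\<^sup>*\<close> the weight ratio is
  \<open>(\<parallel>\<lambda>\<^sub>k\<parallel>/\<parallel>\<lambda>\<^sup>*\<parallel>)\<^bsup>1-1/p\<^esup>\<close>, so \<open>ln (\<parallel>\<lambda>\<^sup>*\<parallel>/\<parallel>\<lambda>\<^sub>k\<parallel>)\<close> contracts by the factor \<open>1 - 1/p\<close>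
  per step and no iterate vanishes. The two bounds follow from \<open>1 - e\<^sup>-\<^sup>x \<le> x \<le> e\<^sup>x - 1\<close>
  and the convexity of \<open>exp\<close>.
\<close>

definition is_quad_reg_min :: "'a::real_normed_vector set \<Rightarrow> ('a \<Rightarrow> real) \<Rightarrow> real \<Rightarrow> 'a \<Rightarrow> bool"
  where "is_quad_reg_min D g w x \<longleftrightarrow> x \<in> D \<and> (\<forall>l\<in>D. g x + w * (norm x)\<^sup>2 \<le> g l + w * (norm l)\<^sup>2)"

lemma is_quad_reg_min_variational_ineq:
  fixes g :: "'a::real_inner \<Rightarrow> real"
  assumes D: "convex D" and g: "convex_on D g" and x: "is_quad_reg_min D g w x" and l: "l \<in> D"
  shows "g x - g l \<le> 2 * w * inner x (l - x)"
proof (rule field_le_epsilon)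
  \<comment> \<open>Compare \<open>x\<close> with \<open>x + \<tau>(l - x)\<close>; the error term \<open>\<tau> K\<close> vanishes as \<open>\<tau> \<rightarrow> 0\<close>.\<close>
  fix e :: real
  assume "0 < e"
  define d where "d = l - x"
  define K where "K = w * (norm d)\<^sup>2"
  define \<tau> where "\<tau> = min 1 (e / (\<bar>K\<bar> + 1))"
  have \<tau>: "0 < \<tau>" "\<tau> \<le> 1"
    using \<open>0 < e\<close> by (auto simp: \<tau>_def)
  have "\<tau> * K \<le> \<tau> * \<bar>K\<bar>"
    using \<tau> by (simp add: mult_left_mono)
  also have "\<dots> \<le> e / (\<bar>K\<bar> + 1) * \<bar>K\<bar>"
    by (intro mult_right_mono) (auto simp: \<tau>_def)
  also have "\<dots> \<le> e"
    using \<open>0 < e\<close> by (simp add: field_simps)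
  finally have \<tau>K: "\<tau> * K \<le> e" .
  define z where "z = (1 - \<tau>) *\<^sub>R x + \<tau> *\<^sub>R l"
  have "x \<in> D"
    using x by (simp add: is_quad_reg_min_def)
  then have "z \<in> D"
    using D l \<tau> by (simp add: z_def convexD)
  then have "g x + w * (norm x)\<^sup>2 \<le> g z + w * (norm z)\<^sup>2"
    using x by (simp add: is_quad_reg_min_def)
  moreover have "g z \<le> (1 - \<tau>) * g x + \<tau> * g l"
    using convex_onD[OF g, of \<tau> x l] \<tau> \<open>x \<in> D\<close> l by (simp add: z_def)
  moreover have "(norm z)\<^sup>2 = (norm x)\<^sup>2 + 2 * \<tau> * inner x d + \<tau>\<^sup>2 * (norm d)\<^sup>2"
    unfolding z_def d_def power2_norm_eq_inner
    by (simp add: inner_commute algebra_simps power2_eq_square)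
  ultimately have "\<tau> * (g x - g l) \<le> \<tau> * (2 * w * inner x d + \<tau> * K)"
    by (simp add: K_def algebra_simps power2_eq_square)
  then have "g x - g l \<le> 2 * w * inner x d + \<tau> * K"
    using \<tau> by simp
  then show "g x - g l \<le> 2 * w * inner x (l - x) + e"
    using \<tau>K by (simp add: d_def)
qed

lemma norm_bounds_of_weighted_monotonicity:
  fixes x y :: "'a::real_inner"
  assumes ws: "0 < ws" "ws \<le> wt" and mono: "0 \<le> wt * inner x (y - x) + ws * inner y (x - y)"
  shows "norm x \<le> norm y" and "norm (x - y) \<le> (1 - ws / wt) * norm y"
proof -
  have "wt * (norm x)\<^sup>2 + ws * (norm y)\<^sup>2 \<le> (wt + ws) * inner x y"
    using mono by (simp add: power2_norm_eq_inner inner_commute algebra_simps)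
  also have "\<dots> \<le> (wt + ws) * (norm x * norm y)"
    using ws by (intro mult_left_mono norm_cauchy_schwarz) auto
  finally have "(norm x - norm y) * (wt * norm x - ws * norm y) \<le> 0"
    by (simp add: algebra_simps power2_eq_square)
  moreover have "wt * norm x - ws * norm y > 0" if "norm x > norm y"
    using ws that by (smt (verit) mult_mono mult_strict_left_mono norm_ge_zero)
  ultimately show "norm x \<le> norm y"
    by (smt (verit) mult_pos_pos)
  have "wt * (norm (x - y))\<^sup>2 \<le> (wt - ws) * inner y (y - x)"
    using mono by (simp add: power2_norm_eq_inner inner_commute algebra_simps)
  also have "\<dots> \<le> (wt - ws) * (norm y * norm (x - y))"
    using ws norm_cauchy_schwarz[of y "y - x"] by (simp add: mult_left_mono norm_minus_commute)
  finally have "norm (x - y) * (wt * norm (x - y)) \<le> norm (x - y) * ((wt - ws) * norm y)"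
    by (simp add: power2_eq_square algebra_simps)
  then have "wt * norm (x - y) \<le> (wt - ws) * norm y"
    using ws by (cases "x = y") auto
  then show "norm (x - y) \<le> (1 - ws / wt) * norm y"
    using ws by (simp add: field_simps)
qed

lemma is_quad_reg_min_compare:
  fixes g :: "'a::real_inner \<Rightarrow> real"
  assumes D: "convex D" and g: "convex_on D g" and ws: "0 < ws" "ws \<le> wt"
    and x: "is_quad_reg_min D g wt x" and y: "is_quad_reg_min D g ws y"
  shows "ws / wt * norm y \<le> norm x" and "norm x \<le> norm y"
    and "norm (x - y) \<le> (1 - ws / wt) * norm y"
proof -
  have "x \<in> D" "y \<in> D"
    using x y by (simp_all add: is_quad_reg_min_def)
  then have "g x - g y \<le> 2 * wt * inner x (y - x)" "g y - g x \<le> 2 * ws * inner y (x - y)"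
    using is_quad_reg_min_variational_ineq[OF D g] x y by blast+
  then have "0 \<le> wt * inner x (y - x) + ws * inner y (x - y)"
    by linarith
  note bounds = norm_bounds_of_weighted_monotonicity[OF ws this]
  show "norm x \<le> norm y" "norm (x - y) \<le> (1 - ws / wt) * norm y"
    by (fact bounds)+
  show "ws / wt * norm y \<le> norm x"
    using bounds(2) norm_triangle_ineq2[of y x] by (simp add: norm_minus_commute algebra_simps)
qed

lemma powr_le_tangent:
  fixes a s t :: real
  assumes a: "0 \<le> a" "a \<le> 1" and s: "0 \<le> s" and t: "0 < t"
  shows "s powr a \<le> t powr a + a * t powr (a - 1) * (s - t)"
proof -
  have "t powr (a - 1) = t powr a / t"
    using t by (simp add: powr_diff)
  moreover have "s powr a \<le> (a * (s / t) + (1 - a)) * t powr a"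
  proof (cases "s = 0")
    case True
    then show ?thesis using a by simp
  next
    case False
    then have "(s / t) powr a * 1 powr (1 - a) \<le> a * (s / t) + (1 - a) * 1"
      using Youngs_inequality_0[of a "1 - a" "s / t" 1] a s t by simp
    then show ?thesis
      using t by (simp add: powr_divide divide_le_eq)
  qed
  ultimately show ?thesis
    using t by (simp add: algebra_simps diff_divide_distrib)
qed

lemma powr_reg_min_imp_is_quad_reg_min:
  fixes g :: "'a::real_normed_vector \<Rightarrow> real"
  assumes r: "0 < r" "r \<le> 2" and \<mu>: "0 \<le> \<mu>" and x: "x \<in> D" "x \<noteq> 0"
    and opt: "\<forall>l\<in>D. g x + \<mu> / r * norm x powr r \<le> g l + \<mu> / r * norm l powr r"
  shows "is_quad_reg_min D g (\<mu> / 2 * norm x powr (r - 2)) x"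
  unfolding is_quad_reg_min_def
proof (intro conjI ballI x)
  fix l
  assume l: "l \<in> D"
  have sq_powr: "((norm v)\<^sup>2) powr (b / 2) = norm v powr b" for v :: 'a and b
    by (simp add: powr_powr flip: powr_numeral)
  have "((norm l)\<^sup>2) powr (r / 2) \<le> ((norm x)\<^sup>2) powr (r / 2)
      + r / 2 * ((norm x)\<^sup>2) powr (r / 2 - 1) * ((norm l)\<^sup>2 - (norm x)\<^sup>2)"
    using r x by (intro powr_le_tangent) auto
  also have "r / 2 - 1 = (r - 2) / 2"
    by simp
  finally have "norm l powr r \<le> norm x powr r + r / 2 * norm x powr (r - 2) * ((norm l)\<^sup>2 - (norm x)\<^sup>2)"
    by (simp only: sq_powr)
  then have "\<mu> / r * norm l powr r
      \<le> \<mu> / r * (norm x powr r + r / 2 * norm x powr (r - 2) * ((norm l)\<^sup>2 - (norm x)\<^sup>2))"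
    using r \<mu> by (intro mult_left_mono) auto
  also have "\<dots> = \<mu> / r * norm x powr r
      + \<mu> / 2 * norm x powr (r - 2) * (norm l)\<^sup>2 - \<mu> / 2 * norm x powr (r - 2) * (norm x)\<^sup>2"
    using r by (simp add: field_simps)
  finally show "g x + \<mu> / 2 * norm x powr (r - 2) * (norm x)\<^sup>2 \<le> g l + \<mu> / 2 * norm x powr (r - 2) * (norm l)\<^sup>2"
    using opt l by fastforce
qed

lemma is_quad_reg_min_powr_weights_compare:
  fixes g :: "'a::real_inner \<Rightarrow> real"
  assumes D: "convex D" and g: "convex_on D g" and w: "0 < w" and c: "0 \<le> c"
    and t: "0 < t" "t \<le> norm y"
    and x: "is_quad_reg_min D g (w * t powr (- c)) x"
    and y: "is_quad_reg_min D g (w * norm y powr (- c)) y"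
  shows "(t / norm y) powr c * norm y \<le> norm x" and "norm x \<le> norm y"
    and "norm (x - y) \<le> (1 - (t / norm y) powr c) * norm y"
proof -
  have ratio: "w * norm y powr (- c) / (w * t powr (- c)) = (t / norm y) powr c"
    using w t by (simp add: powr_minus powr_divide field_simps)
  have "0 < norm y"
    using t by linarith
  then have pos: "0 < w * norm y powr (- c)"
    using w by simp
  have le: "w * norm y powr (- c) \<le> w * t powr (- c)"
    using w t c by (simp add: powr_mono2')
  show "(t / norm y) powr c * norm y \<le> norm x" and "norm x \<le> norm y"
    and "norm (x - y) \<le> (1 - (t / norm y) powr c) * norm y"
    using is_quad_reg_min_compare[OF D g pos le x y] unfolding ratio by auto
qed

lemma ln_ratio_contraction:
  fixes r :: "nat \<Rightarrow> real"
  assumes r0: "0 < r 0" "r 0 \<le> R" and c: "0 \<le> c"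
    and step: "\<And>k. k < n \<Longrightarrow> 0 < r k \<Longrightarrow> r k \<le> R
      \<Longrightarrow> (r k / R) powr c * R \<le> r (Suc k) \<and> r (Suc k) \<le> R"
  shows "k \<le> n \<Longrightarrow> 0 < r k \<and> r k \<le> R \<and> ln (R / r k) \<le> c ^ k * ln (R / r 0)"
proof (induction k)
  case 0
  then show ?case
    using r0 by simp
next
  case (Suc k)
  then have IH: "0 < r k" "r k \<le> R" "ln (R / r k) \<le> c ^ k * ln (R / r 0)"
    by auto
  with Suc.prems step have lower: "(r k / R) powr c * R \<le> r (Suc k)" and upper: "r (Suc k) \<le> R"
    by auto
  have pos: "0 < (r k / R) powr c * R"
    using IH by simp
  with lower have "0 < r (Suc k)"
    by linarith
  with lower IH have "R / r (Suc k) \<le> R / ((r k / R) powr c * R)"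
    by (intro divide_left_mono) auto
  moreover have "0 < R / r (Suc k)"
    using IH \<open>0 < r (Suc k)\<close> by simp
  ultimately have "ln (R / r (Suc k)) \<le> ln (R / ((r k / R) powr c * R))"
    by simp
  also have "\<dots> = c * ln (R / r k)"
    using IH by (simp add: ln_div algebra_simps)
  also have "\<dots> \<le> c * (c ^ k * ln (R / r 0))"
    using IH c by (simp add: mult_left_mono)
  finally show ?case
    using \<open>0 < r (Suc k)\<close> upper by simp
qed

lemma one_minus_exp_neg_le:
  fixes c x a :: real
  assumes "0 \<le> c" "0 \<le> x" "x \<le> a"
  shows "1 - exp (- (c * x)) \<le> c * (exp a - 1)"
proof -
  have "1 - exp (- (c * x)) \<le> c * x"
    using exp_ge_add_one_self[of "- (c * x)"] by linarith
  moreover have "x \<le> exp a - 1"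
    using exp_ge_add_one_self[of a] assms by linarith
  ultimately show ?thesis
    using assms(1) mult_left_mono[of x "exp a - 1" c] by linarith
qed

lemma exp_mult_minus_one_le:
  fixes \<theta> x :: real
  assumes "0 \<le> \<theta>" "\<theta> \<le> 1"
  shows "exp (\<theta> * x) - 1 \<le> \<theta> * (exp x - 1)"
proof -
  have "exp ((1 - \<theta>) *\<^sub>R 0 + \<theta> *\<^sub>R x) \<le> (1 - \<theta>) * exp 0 + \<theta> * exp x"
    using assms by (intro convex_onD[OF exp_convex]) auto
  then show ?thesis
    by (simp add: algebra_simps)
qed

lemma contraction_error_bounds:
  fixes c R \<rho> r\<^sub>0 :: real
  assumes c: "0 \<le> c" "c \<le> 1" and \<rho>: "0 < \<rho>" "\<rho> \<le> R" and r\<^sub>0: "0 < r\<^sub>0"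
    and contr: "ln (R / \<rho>) \<le> c ^ m * ln (R / r\<^sub>0)"
  shows "(1 - (\<rho> / R) powr c) * R \<le> c * R * (exp (c ^ m * ln (R / r\<^sub>0)) - 1)"
    and "c * R * (exp (c ^ m * ln (R / r\<^sub>0)) - 1) \<le> R / r\<^sub>0 * (R - r\<^sub>0) * c ^ Suc m"
proof -
  have R: "0 < R"
    using \<rho> by linarith
  have "(\<rho> / R) powr c = exp (- (c * ln (R / \<rho>)))"
    using \<rho> R by (simp add: powr_def ln_div algebra_simps)
  moreover have "1 - exp (- (c * ln (R / \<rho>))) \<le> c * (exp (c ^ m * ln (R / r\<^sub>0)) - 1)"
    using \<rho> by (intro one_minus_exp_neg_le c contr) simp
  ultimately show "(1 - (\<rho> / R) powr c) * R \<le> c * R * (exp (c ^ m * ln (R / r\<^sub>0)) - 1)"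
    using R mult_right_mono[of _ _ R] by (simp add: ac_simps)
  have "c * R * (exp (c ^ m * ln (R / r\<^sub>0)) - 1) \<le> c * R * (c ^ m * (exp (ln (R / r\<^sub>0)) - 1))"
    using exp_mult_minus_one_le c R by (intro mult_left_mono) (auto simp: power_le_one)
  also have "\<dots> = R / r\<^sub>0 * (R - r\<^sub>0) * c ^ Suc m"
    using R r\<^sub>0 by (simp add: field_simps)
  finally show "c * R * (exp (c ^ m * ln (R / r\<^sub>0)) - 1) \<le> R / r\<^sub>0 * (R - r\<^sub>0) * c ^ Suc m" .
qed

theorem theoremA1:
  fixes D :: "'a::euclidean_space set" and g :: "'a \<Rightarrow> real"
    and p \<mu> :: real and N :: nat and lam :: "nat \<Rightarrow> 'a" and lstar :: 'a
  assumes p: "p \<ge> 1" and mu: "\<mu> > 0"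
    and convD: "convex D" and convg: "convex_on D g"
    and opt_mem: "lstar \<in> D"
    and opt: "\<forall>l\<in>D. g lstar + \<mu> / (1 + 1/p) * norm lstar powr (1 + 1/p)
                     \<le> g l + \<mu> / (1 + 1/p) * norm l powr (1 + 1/p)"
    and lstar_nz: "lstar \<noteq> 0"
    and lam0_nz: "lam 0 \<noteq> 0"
    and iter_mem: "\<forall>k<N. lam (Suc k) \<in> D"
    and iter: "\<forall>k<N. \<forall>l\<in>D.
        g (lam (Suc k)) + \<mu> / 2 * (if lam k \<noteq> 0 then norm (lam k) powr (1/p - 1) else 0) * (norm (lam (Suc k)))\<^sup>2
        \<le> g l + \<mu> / 2 * (if lam k \<noteq> 0 then norm (lam k) powr (1/p - 1) else 0) * (norm l)\<^sup>2"
    and N: "N \<ge> 1"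
    and init: "norm (lam 0) \<le> norm lstar"
    and neq: "\<forall>k\<in>{1..N}. lam k \<noteq> lstar"
  shows "norm (lam N - lstar)
           \<le> (1 - 1/p) * norm lstar * (exp ((1 - 1/p) ^ (N - 1) * ln (norm lstar / norm (lam 0))) - 1)
       \<and> (1 - 1/p) * norm lstar * (exp ((1 - 1/p) ^ (N - 1) * ln (norm lstar / norm (lam 0))) - 1)
           \<le> norm lstar / norm (lam 0) * (norm lstar - norm (lam 0)) * (1 - 1/p) ^ N"
proof -
  define c where "c = 1 - 1/p"
  define R where "R = norm lstar"
  define r where "r k = norm (lam k)" for k
  have q: "0 < 1/p" "1/p \<le> 1"
    using p by auto
  then have c: "0 \<le> c" "c \<le> 1"
    by (auto simp: c_def)
  from q have exponent: "0 < 1 + 1/p" "1 + 1/p \<le> 2"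
    by linarith+
  have R: "0 < R"
    using lstar_nz by (simp add: R_def)
  have "is_quad_reg_min D g (\<mu> / 2 * norm lstar powr ((1 + 1/p) - 2)) lstar"
    by (rule powr_reg_min_imp_is_quad_reg_min) (use exponent mu opt_mem lstar_nz opt in auto)
  then have star: "is_quad_reg_min D g (\<mu> / 2 * norm lstar powr (- c)) lstar"
    by (simp add: c_def)
  have step: "(r k / R) powr c * R \<le> r (Suc k) \<and> r (Suc k) \<le> R
      \<and> norm (lam (Suc k) - lstar) \<le> (1 - (r k / R) powr c) * R"
    if k: "k < N" and rk: "0 < r k" "r k \<le> R" for k
  proof -
    have "is_quad_reg_min D g (\<mu> / 2 * r k powr (- c)) (lam (Suc k))"
      using iter iter_mem k rk by (auto simp: is_quad_reg_min_def r_def c_def)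
    from is_quad_reg_min_powr_weights_compare[OF convD convg _ c(1) rk[unfolded R_def] this star] mu
    show ?thesis
      by (simp add: R_def r_def)
  qed
  obtain m where m: "N = Suc m"
    using N by (cases N) auto
  have rm: "0 < r m" "r m \<le> R" "ln (R / r m) \<le> c ^ m * ln (R / r 0)"
    using ln_ratio_contraction[of r R c N m] lam0_nz init step c m by (auto simp: r_def R_def)
  have "norm (lam N - lstar) \<le> (1 - (r m / R) powr c) * R"
    using step[of m] rm m by simp
  with contraction_error_bounds[OF c rm(1,2) _ rm(3)] lam0_nz show ?thesis
    by (simp add: c_def R_def r_def m)
qed

end
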